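(* Let $a,b\in\mathbb C$, let $p,k\ge0$ be integers and let $c_j,d_j,e_j\in\mathbb C$ for $j=0,\dots,p-1$. Then the coefficient of $x^p$ in $\widetilde{\mathcal T}_k^{a,b}\left[\left(\prod_{j=0}^{p-1}(c_jx-d_ji+e_j)\right)_i\right]$ equals $$\sum_{j=0}^{k}\frac{k!}{(k-j)!}\left(\sum_{\substack{S\sqcup T=\{0,\dots,p-1\}\\ |S|=j}}\prod_{s\in S}d_s\prod_{t\in T}c_t\right)\prod_{r=0}^{k-j-1}(a-b+j+r),$$ where the inner sum is over all ordered pairs $(S,T)$ of disjoint subsets with union $\{0,\dots,p-1\}$ and $|S|=j$ (it is empty, hence $0$, when $j>p$).
   Context: For integers $0\le i\le k$, $P_i^k(x;a,b):=\prod_{j=0}^{k-i-1}(x+j+a)\prod_{j=0}^{i-1}(x-j+b)$. For a sequence of polynomials $(a_i(x))_{i\ge0}$, $\widetilde{\mathcal T}_k^{a,b}[(a_i(x))_i]:=(-1)^k\sum_{i=0}^k(-1)^{k-i}\binom{k}{i}P_i^k(x;a,b)\,a_i(x)$. *)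

theory Defs
  imports Complex_Main "HOL-Computational_Algebra.Polynomial"
begin

definition Ppoly :: "nat \<Rightarrow> nat \<Rightarrow> complex \<Rightarrow> complex \<Rightarrow> complex poly" where
  "Ppoly i k a b = (\<Prod>j<k - i. [:of_nat j + a, 1:]) * (\<Prod>j<i. [:b - of_nat j, 1:])"

definition Ttilde :: "nat \<Rightarrow> complex \<Rightarrow> complex \<Rightarrow> (nat \<Rightarrow> complex poly) \<Rightarrow> complex poly" where
  "Ttilde k a b A = (-1) ^ k * (\<Sum>i\<in>{0..k}. (-1) ^ (k - i) * of_nat (k choose i) * Ppoly i k a b * A i)"

end

theory Submission
  imports Defs "HOL-Combinatorics.Stirling"
begin

text \<open>Expanding the product over the set \<open>S\<close> of factors that contribute their term
\<open>-d s * i\<close> and using linearity, the coefficient reduces to the coefficients of \<open>x^m\<close> in the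
operator applied to \<open>(i^m)\<close>. Writing \<open>i^m = \<Sum>l. l! S(m,l) (i choose l)\<close> with Stirling numbers
of the second kind, it remains to evaluate the operator on \<open>(i choose l)\<close>: after reindexing, the
alternating sum is a Chu-Vandermonde convolution of rising factorials, and the result is the
constant \<open>(-1)^l (k choose l) pochhammer (a - b + l) (k - l)\<close> times the monic polynomial
\<open>(x + b) (x + b - 1) ... (x + b - l + 1)\<close> of degree \<open>l\<close>. So the operator applied to \<open>(i^m)\<close> has
degree at most \<open>m\<close> and only \<open>l = m\<close> reaches \<open>x^m\<close>, while the remaining linear factors
contribute \<open>\<Prod>t\<notin>S. c t\<close> to the top coefficient.\<close>

definition falling_poly :: "'a::comm_ring_1 \<Rightarrow> nat \<Rightarrow> 'a poly" where
  "falling_poly b n = (\<Prod>j<n. [:b - of_nat j, 1:])"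

lemma falling_poly_Suc: "falling_poly b (Suc n) = falling_poly b n * [:b - of_nat n, 1:]"
  by (simp add: falling_poly_def)

lemma falling_poly_add: "falling_poly b (l + n) = falling_poly b l * falling_poly (b - of_nat l) n"
  by (induction n) (simp_all add: falling_poly_Suc falling_poly_def algebra_simps)

lemma falling_poly_eq_pochhammer: "falling_poly b n = (-1) ^ n * pochhammer (- [:b, 1:]) n"
proof (induction n)
  case (Suc n)
  have "[:b - of_nat n, 1:] = - (- [:b, 1:] + of_nat n)"
    by (simp add: of_nat_poly)
  then show ?case
    by (simp only: falling_poly_Suc Suc pochhammer_Suc power_Suc) (simp add: algebra_simps)
qed (simp add: falling_poly_def)

lemma degree_falling_poly [simp]: "degree (falling_poly b n :: 'a::idom poly) = n"
  by (simp add: falling_poly_def degree_prod_sum_eq)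

lemma coeff_falling_poly_degree [simp]: "coeff (falling_poly b n :: 'a::idom poly) n = 1"
  using lead_coeff_prod[of "\<lambda>j. [:b - of_nat j, 1:]" "{..<n}"] degree_falling_poly[of b n]
  by (simp add: falling_poly_def)

lemma pochhammer_pCons_0: "pochhammer [:c:] n = [:pochhammer c n:]"
  by (induction n) (simp_all add: pochhammer_Suc of_nat_poly mult.commute)

lemma Ppoly_eq_pochhammer_falling_poly: "Ppoly i k a b = pochhammer [:a, 1:] (k - i) * falling_poly b i"
  by (simp add: Ppoly_def falling_poly_def pochhammer_prod atLeast0LessThan of_nat_poly add.commute)

lemma sum_alternating_pochhammer_falling_poly:
  fixes a b :: "'a::comm_ring_1"
  shows "(\<Sum>i\<le>K. (-1) ^ (K - i) * of_nat (K choose i) * pochhammer [:a, 1:] (K - i) * falling_poly b i)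
         = (-1) ^ K * [:pochhammer (a - b) K:]"
proof -
  have sign: "(-1) ^ (K - i) * c * falling_poly b i = (-1) ^ K * c * pochhammer (- [:b, 1:]) i"
    if "i \<le> K" for i and c :: "'a poly"
  proof -
    obtain j where "K = i + j" using \<open>i \<le> K\<close> le_Suc_ex by blast
    then show ?thesis by (simp add: falling_poly_eq_pochhammer power_add mult_ac)
  qed
  have "(\<Sum>i\<le>K. (-1) ^ (K - i) * of_nat (K choose i) * pochhammer [:a, 1:] (K - i) * falling_poly b i)
      = (-1) ^ K * (\<Sum>i\<le>K. of_nat (K choose i) * pochhammer (- [:b, 1:]) i * pochhammer [:a, 1:] (K - i))"
    unfolding sum_distrib_left
  proof (rule sum.cong)
    fix i assume "i \<in> {..K}"
    then show "(-1) ^ (K - i) * of_nat (K choose i) * pochhammer [:a, 1:] (K - i) * falling_poly b i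
        = (-1) ^ K * (of_nat (K choose i) * pochhammer (- [:b, 1:]) i * pochhammer [:a, 1:] (K - i))"
      using sign[of i "of_nat (K choose i) * pochhammer [:a, 1:] (K - i)"] by (simp add: mult_ac)
  qed simp
  also have "\<dots> = (-1) ^ K * pochhammer (- [:b, 1:] + [:a, 1:]) K"
    by (simp only: pochhammer_binomial_sum)
  finally show ?thesis by (simp add: pochhammer_pCons_0)
qed

lemma sum_atLeast0AtMost_drop_initial_zeros:
  fixes f :: "nat \<Rightarrow> 'a::comm_monoid_add"
  assumes "\<And>i. i < l \<Longrightarrow> f i = 0"
  shows "(\<Sum>i\<in>{0..l + K}. f i) = (\<Sum>j\<le>K. f (l + j))"
proof -
  have "(\<Sum>i\<in>{0..l + K}. f i) = (\<Sum>i\<in>{l..l + K}. f i)"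
    by (rule sum.mono_neutral_right) (auto simp: assms)
  also have "\<dots> = (\<Sum>j\<le>K. f (l + j))"
    using sum.shift_bounds_cl_nat_ivl[of f 0 l K] by (simp add: atMost_atLeast0 add.commute)
  finally show ?thesis .
qed

lemma Ttilde_sum: "finite F \<Longrightarrow> Ttilde k a b (\<lambda>i. \<Sum>s\<in>F. f s i) = (\<Sum>s\<in>F. Ttilde k a b (f s))"
  unfolding Ttilde_def by (simp add: sum_distrib_left sum_distrib_right flip: sum.swap[of _ F])

lemma Ttilde_mult_left: "Ttilde k a b (\<lambda>i. q * f i) = q * Ttilde k a b f"
  unfolding Ttilde_def by (simp add: sum_distrib_left mult_ac)

lemma Ttilde_binomial:
  "Ttilde k a b (\<lambda>i. of_nat (i choose l)) =
     smult ((-1) ^ l * of_nat (k choose l) * pochhammer (a - b + of_nat l) (k - l)) (falling_poly b l)"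
proof (cases "l \<le> k")
  case False
  then show ?thesis
    by (simp add: Ttilde_def binomial_eq_0)
next
  case True
  then obtain K where k: "k = l + K" using le_Suc_ex by blast
  have choose: "((l + j) choose l) * ((l + K) choose (l + j)) = ((l + K) choose l) * (K choose j)"
    if "j \<le> K" for j
    using choose_mult[of l "l + j" "l + K"] that by (simp add: mult.commute)
  have minus_one_poly_power: "(-1 :: complex poly) ^ n = [:(-1) ^ n:]" for n
    by (simp add: poly_const_pow flip: pCons_one)
  have "(\<Sum>i\<in>{0..k}. (-1) ^ (k - i) * of_nat (k choose i) * Ppoly i k a b * of_nat (i choose l))
      = (\<Sum>j\<le>K. (-1) ^ (K - j) * of_nat ((k choose (l + j)) * ((l + j) choose l)) *
                 Ppoly (l + j) k a b)"
    unfolding k by (subst sum_atLeast0AtMost_drop_initial_zeros) (simp_all add: mult_ac of_nat_mult)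
  also have "\<dots> = of_nat (k choose l) * falling_poly b l *
      (\<Sum>j\<le>K. (-1) ^ (K - j) * of_nat (K choose j) * pochhammer [:a, 1:] (K - j) *
                falling_poly (b - of_nat l) j)"
    unfolding sum_distrib_left
    by (intro sum.cong refl) (simp add: choose k Ppoly_eq_pochhammer_falling_poly falling_poly_add mult_ac del: of_nat_mult, simp)
  also have "\<dots> = of_nat (k choose l) * falling_poly b l * ((-1) ^ K * [:pochhammer (a - b + of_nat l) K:])"
    by (subst sum_alternating_pochhammer_falling_poly) (simp add: algebra_simps)
  finally show ?thesis
    by (simp add: Ttilde_def k power_add of_nat_poly minus_one_poly_power mult_ac)
qed

lemma Stirling_Suc_left: "Stirling (Suc m) l = l * Stirling m l + (if l = 0 then 0 else Stirling m (l - 1))"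
  by (cases l) simp_all

lemma mult_binomial_eq: "i * (i choose l) = l * (i choose l) + Suc l * (i choose Suc l)"
proof (cases "l \<le> i")
  case True
  have "Suc l * (i choose Suc l) = (i - l) * (i choose l)"
    by (metis binomial_absorption binomial_absorb_comp)
  with True show ?thesis by (simp flip: add_mult_distrib)
qed (simp add: binomial_eq_0)

lemma power_eq_sum_Stirling_binomial: "i ^ m = (\<Sum>l\<le>m. Stirling m l * fact l * (i choose l))"
proof (induction m)
  case (Suc m)
  have "i ^ Suc m = (\<Sum>l\<le>m. Stirling m l * fact l * (l * (i choose l) + Suc l * (i choose Suc l)))"
    unfolding mult_binomial_eq[symmetric] by (simp add: Suc sum_distrib_left mult_ac)
  also have "\<dots> = (\<Sum>l\<le>m. l * Stirling m l * fact l * (i choose l)) +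
                   (\<Sum>l\<le>m. Stirling m l * fact (Suc l) * (i choose Suc l))"
    by (simp add: sum.distrib algebra_simps)
  also have "\<dots> = (\<Sum>l\<le>Suc m. l * Stirling m l * fact l * (i choose l)) +
                   (\<Sum>l\<le>Suc m. (if l = 0 then 0 else Stirling m (l - 1)) * fact l * (i choose l))"
    by (subst (2) sum.atMost_Suc_shift) simp
  also have "\<dots> = (\<Sum>l\<le>Suc m. Stirling (Suc m) l * fact l * (i choose l))"
    by (simp add: Stirling_Suc_left sum.distrib[symmetric] algebra_simps)
  finally show ?case .
qed simp

lemma Ttilde_power:
  "Ttilde k a b (\<lambda>i. of_nat i ^ m) =
     (\<Sum>l\<le>m. smult (of_nat (Stirling m l) * fact l * (-1) ^ l * of_nat (k choose l) *
                     pochhammer (a - b + of_nat l) (k - l)) (falling_poly b l))"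
proof -
  have "(\<lambda>i. of_nat i ^ m :: complex poly) =
      (\<lambda>i. \<Sum>l\<le>m. of_nat (Stirling m l * fact l) * of_nat (i choose l))"
    by (simp flip: of_nat_power of_nat_mult of_nat_sum add: power_eq_sum_Stirling_binomial)
  then have "Ttilde k a b (\<lambda>i. of_nat i ^ m) =
      (\<Sum>l\<le>m. of_nat (Stirling m l * fact l) * Ttilde k a b (\<lambda>i. of_nat (i choose l)))"
    by (simp only: Ttilde_sum[OF finite_atMost] Ttilde_mult_left)
  then show ?thesis
    unfolding Ttilde_binomial by (simp add: of_nat_poly mult_ac)
qed

lemma degree_Ttilde_power: "degree (Ttilde k a b (\<lambda>i. of_nat i ^ m)) \<le> m"
  unfolding Ttilde_power
  by (rule degree_sum_le) (auto intro: order.trans[OF degree_smult_le])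

lemma coeff_Ttilde_power:
  "coeff (Ttilde k a b (\<lambda>i. of_nat i ^ m)) m =
     (-1) ^ m * fact m * of_nat (k choose m) * pochhammer (a - b + of_nat m) (k - m)"
proof -
  have "coeff (falling_poly b l) m = 0" if "l \<in> {..m} - {m}" for l
    using that by (simp add: coeff_eq_0)
  then show ?thesis
    unfolding Ttilde_power coeff_sum coeff_smult
    by (subst sum.remove[of _ m]) (simp_all add: mult_ac)
qed

lemma coeff_mult_degree_bounds:
  fixes q h :: "'a::comm_semiring_0 poly"
  assumes "degree q \<le> u" "degree h \<le> v"
  shows "coeff (q * h) (u + v) = coeff q u * coeff h v"
proof (cases "degree q = u \<and> degree h = v")
  case True
  then show ?thesis using coeff_mult_degree_sum[of q h] by simp
next
  case False
  then have "degree (q * h) < u + v"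
    using assms degree_mult_le[of q h] by linarith
  moreover have "coeff q u = 0 \<or> coeff h v = 0"
    using False assms by (auto intro: coeff_eq_0)
  ultimately show ?thesis by (auto intro: coeff_eq_0)
qed

lemma degree_prod_linear_le:
  fixes e c :: "'b \<Rightarrow> 'a::comm_semiring_1"
  shows "degree (\<Prod>t\<in>T. [:e t, c t:]) \<le> card T"
proof (cases "finite T")
  case True
  have "degree (\<Prod>t\<in>T. [:e t, c t:]) \<le> (\<Sum>t\<in>T. degree [:e t, c t:])"
    using degree_prod_sum_le[OF True, of "\<lambda>t. [:e t, c t:]"] unfolding o_def .
  also have "\<dots> \<le> (\<Sum>t\<in>T. 1)"
    by (intro sum_mono) (simp add: degree_pCons_le)
  finally show ?thesis by simp
qed simp

lemma coeff_prod_linear_card: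
  fixes e c :: "'b \<Rightarrow> 'a::comm_semiring_1"
  assumes "finite T"
  shows "coeff (\<Prod>t\<in>T. [:e t, c t:]) (card T) = (\<Prod>t\<in>T. c t)"
  using assms
proof (induction T rule: finite_induct)
  case (insert x T)
  then show ?case
    using coeff_mult_degree_bounds[OF degree_pCons_le[of "e x" "[:c x:]"] degree_prod_linear_le[of e c T]]
    by (simp add: add.commute)
qed simp

lemma prod_linear_expand:
  fixes e c d :: "'b \<Rightarrow> 'a::comm_ring_1"
  assumes "finite A"
  shows "(\<Prod>j\<in>A. [:e j - d j * x, c j:]) =
           (\<Sum>S\<in>Pow A. smult (\<Prod>s\<in>S. - d s) (\<Prod>t\<in>A - S. [:e t, c t:]) * [:x:] ^ card S)"
proof -
  have "(\<Prod>j\<in>A. [:e j - d j * x, c j:]) = (\<Prod>j\<in>A. [:- d j:] * [:x:] + [:e j, c j:])"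
    by (simp add: algebra_simps)
  also have "\<dots> = (\<Sum>S\<in>Pow A. (\<Prod>s\<in>S. [:- d s:] * [:x:]) * (\<Prod>t\<in>A - S. [:e t, c t:]))"
    by (rule prod_add[OF assms])
  also have "\<dots> = (\<Sum>S\<in>Pow A. [:\<Prod>s\<in>S. - d s:] * [:x:] ^ card S * (\<Prod>t\<in>A - S. [:e t, c t:]))"
    by (simp only: prod.distrib prod_constant prod_to_poly)
  finally show ?thesis
    by (simp add: mult_ac)
qed

lemma coeff_Ttilde_prod_linear:
  fixes c d e :: "'b \<Rightarrow> complex"
  assumes "finite A"
  shows "coeff (Ttilde k a b (\<lambda>i. \<Prod>j\<in>A. [:e j - d j * of_nat i, c j:])) (card A) =
    (\<Sum>S\<in>Pow A. fact (card S) * of_nat (k choose card S) * pochhammer (a - b + of_nat (card S)) (k - card S) *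
                 ((\<Prod>s\<in>S. d s) * (\<Prod>t\<in>A - S. c t)))"
proof -
  define Q where "Q S = smult (\<Prod>s\<in>S. - d s) (\<Prod>t\<in>A - S. [:e t, c t:])" for S
  have "Ttilde k a b (\<lambda>i. \<Prod>j\<in>A. [:e j - d j * of_nat i, c j:]) =
      (\<Sum>S\<in>Pow A. Q S * Ttilde k a b (\<lambda>i. of_nat i ^ card S))"
    unfolding prod_linear_expand[OF assms] of_nat_poly[symmetric] Q_def
    by (simp only: Ttilde_sum[OF finite_Pow_iff[THEN iffD2, OF assms]] Ttilde_mult_left)
  moreover have "coeff (Q S * Ttilde k a b (\<lambda>i. of_nat i ^ card S)) (card A) =
      fact (card S) * of_nat (k choose card S) * pochhammer (a - b + of_nat (card S)) (k - card S) *
      ((\<Prod>s\<in>S. d s) * (\<Prod>t\<in>A - S. c t))" if "S \<in> Pow A" for S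
  proof -
    have "finite S"
      using that assms by (auto intro: finite_subset)
    then have le: "card S \<le> card A" and S: "card (A - S) = card A - card S"
      using that assms by (simp_all add: card_mono card_Diff_subset)
    have "degree (Q S) \<le> card (A - S)"
      unfolding Q_def using degree_smult_le degree_prod_linear_le order_trans by blast
    then have "coeff (Q S * Ttilde k a b (\<lambda>i. of_nat i ^ card S)) (card (A - S) + card S) =
        coeff (Q S) (card (A - S)) * coeff (Ttilde k a b (\<lambda>i. of_nat i ^ card S)) (card S)"
      by (rule coeff_mult_degree_bounds[OF _ degree_Ttilde_power])
    also have "card (A - S) + card S = card A"
      using S le by simp
    also have "coeff (Q S) (card (A - S)) = (-1) ^ card S * (\<Prod>s\<in>S. d s) * (\<Prod>t\<in>A - S. c t)"
      using assms by (simp add: Q_def coeff_prod_linear_card prod_uminus)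
    finally show ?thesis
      by (simp add: coeff_Ttilde_power mult_ac flip: power_add mult_2 power_mult)
  qed
  ultimately show ?thesis
    by (simp add: coeff_sum)
qed

lemma sum_Pow_group_card:
  fixes f :: "nat \<Rightarrow> 'a::comm_semiring_0"
  assumes "finite A" "finite J" "\<And>S. S \<subseteq> A \<Longrightarrow> card S \<notin> J \<Longrightarrow> f (card S) = 0"
  shows "(\<Sum>S\<in>Pow A. f (card S) * g S) = (\<Sum>j\<in>J. f j * (\<Sum>S | S \<subseteq> A \<and> card S = j. g S))"
proof -
  have "(\<Sum>S\<in>Pow A. f (card S) * g S) = (\<Sum>S\<in>{S\<in>Pow A. card S \<in> J}. f (card S) * g S)"
    by (rule sum.mono_neutral_right) (auto simp: assms)
  also have "\<dots> = (\<Sum>j\<in>J. \<Sum>S\<in>{S\<in>{S\<in>Pow A. card S \<in> J}. card S = j}. f (card S) * g S)"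
    by (rule sum.group[symmetric]) (auto simp: assms)
  also have "\<dots> = (\<Sum>j\<in>J. f j * (\<Sum>S | S \<subseteq> A \<and> card S = j. g S))"
    by (intro sum.cong refl) (auto simp: sum_distrib_left intro!: sum.cong)
  finally show ?thesis .
qed

theorem corollary3:
  fixes a b :: complex and p k :: nat and c d e :: "nat \<Rightarrow> complex"
  shows "coeff (Ttilde k a b (\<lambda>i. \<Prod>j<p. [:e j - d j * of_nat i, c j:])) p =
    (\<Sum>j\<in>{0..k}. (fact k / fact (k - j)) *
       (\<Sum>S\<in>{S. S \<subseteq> {0..<p} \<and> card S = j}. (\<Prod>s\<in>S. d s) * (\<Prod>t\<in>{0..<p} - S. c t)) *
       (\<Prod>r<k - j. a - b + of_nat j + of_nat r))"
proof -
  define F where "F j = fact j * of_nat (k choose j) * pochhammer (a - b + of_nat j) (k - j)" for j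
  have "coeff (Ttilde k a b (\<lambda>i. \<Prod>j<p. [:e j - d j * of_nat i, c j:])) p =
      (\<Sum>S\<in>Pow {0..<p}. F (card S) * ((\<Prod>s\<in>S. d s) * (\<Prod>t\<in>{0..<p} - S. c t)))"
    using coeff_Ttilde_prod_linear[of "{..<p}" k a b e d c] by (simp add: F_def atLeast0LessThan)
  also have "\<dots> = (\<Sum>j\<in>{0..k}. F j *
      (\<Sum>S | S \<subseteq> {0..<p} \<and> card S = j. (\<Prod>s\<in>S. d s) * (\<Prod>t\<in>{0..<p} - S. c t)))"
    by (rule sum_Pow_group_card) (auto simp: F_def binomial_eq_0)
  finally show ?thesis
    by (simp add: F_def binomial_fact pochhammer_prod atLeast0LessThan mult_ac)
qed

end
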